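(* In the setting below, let $n>2$ be an integer and let $(x_f,y_f,\theta_f)$ be any goal pose. The minimum travel time over all $2n\pi$-arc $LSL$ and $RSR$ paths reaching this goal pose is not smaller than the minimum travel time over all $4\pi$-arc $LSL$ and $RSR$ paths reaching it. In other words, extending the ranges of $\alpha$ and $\gamma$ beyond $[0,4\pi)$ does not reduce the minimum travel time.
   Context: Setting: a vehicle moves in the plane at unit speed with minimum turning radius $r>0$, in a steady current $(w_x,w_y)$ with speed $v_w=\sqrt{w_x^2+w_y^2}\in(0,1)$. The start pose is $(0,0,0)$ and the goal pose is $(x_f,y_f,\theta_f)$ with $\theta_f\in[0,2\pi)$. An $LSL$ path has parameters $(\alpha,\beta,\gamma)$ with $\alpha,\gamma\ge0$ and $\beta\ge0$: a left arc of angle $\alpha$ of radius $r$, a straight segment of length $\beta$, and a left arc of angle $\gamma$, in the frame moving with the current. Its travel time is $T=r(\alpha+\gamma)+\beta$. It reaches the goal iff for some $k\in\mathbb{Z}$: $\alpha+\gamma=2k\pi+\theta_f$, $x_f-w_xT=r\sin\theta_f+\beta\cos\alpha$, and $y_f-w_yT=r(1-\cos\theta_f)+\beta\sin\alpha$. An $RSR$ path is the analogous path with right arcs, with $T=r(\alpha+\gamma)+\beta$. It reaches the goal iff for some $k\in\mathbb{Z}$: $-\alpha-\gamma=2k\pi+\theta_f$, $x_f-w_xT=-r\sin\theta_f+\beta\cos\alpha$, and $y_f-w_yT=-r(1-\cos\theta_f)-\beta\sin\alpha$. For a positive integer $m$, a path is a $2m\pi$-arc path if $\alpha,\gamma\in[0,2m\pi)$.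 In particular, $4\pi$-arc paths are the case $m=2$. *)

theory Defs
  imports Complex_Main
begin

datatype path_type = LSL | RSR

definition travel_time :: "real \<Rightarrow> real \<Rightarrow> real \<Rightarrow> real \<Rightarrow> real" where
  "travel_time r \<alpha> \<beta> \<gamma> = r * (\<alpha> + \<gamma>) + \<beta>"

text \<open>A path of type LSL or RSR with parameters (alpha, beta, gamma), radius r, in the current
  (wx, wy), starting at pose (0,0,0), reaches the goal pose (xf, yf, thf).\<close>
definition reaches ::
  "path_type \<Rightarrow> real \<Rightarrow> real \<Rightarrow> real \<Rightarrow> real \<Rightarrow> real \<Rightarrow> real \<Rightarrow> real \<Rightarrow> real \<Rightarrow> real \<Rightarrow> bool" where
  "reaches pt r wx wy xf yf thf \<alpha> \<beta> \<gamma> \<longleftrightarrow>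
     \<alpha> \<ge> 0 \<and> \<beta> \<ge> 0 \<and> \<gamma> \<ge> 0 \<and>
     (let T = travel_time r \<alpha> \<beta> \<gamma> in
      (case pt of
         LSL \<Rightarrow> (\<exists>k::int. \<alpha> + \<gamma> = 2 * of_int k * pi + thf) \<and>
                xf - wx * T = r * sin thf + \<beta> * cos \<alpha> \<and>
                yf - wy * T = r * (1 - cos thf) + \<beta> * sin \<alpha>
       | RSR \<Rightarrow> (\<exists>k::int. - \<alpha> - \<gamma> = 2 * of_int k * pi + thf) \<and>
                xf - wx * T = - r * sin thf + \<beta> * cos \<alpha> \<and>
                yf - wy * T = - r * (1 - cos thf) - \<beta> * sin \<alpha>))"

definition arc_bounded :: "nat \<Rightarrow> real \<Rightarrow> real \<Rightarrow> bool" where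
  "arc_bounded m \<alpha> \<gamma> \<longleftrightarrow> 0 \<le> \<alpha> \<and> \<alpha> < 2 * real m * pi \<and> 0 \<le> \<gamma> \<and> \<gamma> < 2 * real m * pi"

end

theory Submission
  imports Defs
begin

text \<open>Only the total turning \<open>S = \<alpha> + \<gamma>\<close> of a path enters the goal conditions: it must agree
  with \<open>\<plusminus>\<theta>\<^sub>f\<close> modulo \<open>2\<pi>\<close>, and the straight leg of length \<open>\<beta>\<close> and heading \<open>\<alpha>\<close> must
  cover \<open>d - wT\<close>, where \<open>d\<close> depends only on the goal pose and \<open>T = rS + \<beta>\<close>.
  If \<open>S \<ge> 4\<pi>\<close>, subtract a multiple of \<open>2\<pi>\<close> to get \<open>S' \<in> [2\<pi>, 4\<pi>)\<close>. The function
  \<open>g T = T - \<bar>d - wT\<bar>\<close> is continuous with \<open>g 0 \<le> rS' \<le> rS = g (rS + \<beta>)\<close>, so by the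
  intermediate value theorem some \<open>T' \<le> rS + \<beta>\<close> has \<open>g T' = rS'\<close>. Taking
  \<open>\<beta>' = \<bar>d - wT'\<bar>\<close>, the polar angle \<open>\<alpha>' \<in> [0, 2\<pi>)\<close> of \<open>d - wT'\<close> and \<open>\<gamma>' = S' - \<alpha>'\<close>
  gives a \<open>4\<pi>\<close>-arc path of the same type that is no slower.\<close>

lemma polar_coordinates_2pi:
  fixes u v :: real
  obtains t where "0 \<le> t" "t < 2 * pi"
    "u = sqrt (u\<^sup>2 + v\<^sup>2) * cos t" "v = sqrt (u\<^sup>2 + v\<^sup>2) * sin t"
proof (cases "u = 0 \<and> v = 0")
  case True
  then show ?thesis by (intro that[of 0]) auto
next
  case False
  define \<rho> where "\<rho> = sqrt (u\<^sup>2 + v\<^sup>2)"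
  have "\<rho> > 0"
    using False by (auto simp: \<rho>_def sum_power2_gt_zero_iff)
  have \<rho>_sq: "\<rho>\<^sup>2 = u\<^sup>2 + v\<^sup>2"
    by (simp add: \<rho>_def)
  have "(u / \<rho>)\<^sup>2 + (v / \<rho>)\<^sup>2 = (u\<^sup>2 + v\<^sup>2) / \<rho>\<^sup>2"
    by (simp add: power_divide add_divide_distrib)
  also have "\<dots> = 1"
    using \<open>\<rho> > 0\<close> by (simp flip: \<rho>_sq)
  finally have "(u / \<rho>)\<^sup>2 + (v / \<rho>)\<^sup>2 = 1" .
  then obtain t where t: "0 \<le> t" "t < 2 * pi" "u / \<rho> = cos t" "v / \<rho> = sin t"
    by (rule sincos_total_2pi)
  with \<open>\<rho> > 0\<close> have "u = \<rho> * cos t" "v = \<rho> * sin t"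
    by (simp_all add: field_simps)
  with t(1,2) show ?thesis
    by (rule that[of t, folded \<rho>_def])
qed

definition straight_leg :: "real \<Rightarrow> real \<Rightarrow> real \<Rightarrow> real \<Rightarrow> real \<Rightarrow> real \<Rightarrow> real \<Rightarrow> real \<Rightarrow> bool" where
  "straight_leg r wx wy a b S \<alpha> \<beta> \<longleftrightarrow>
     0 \<le> \<beta> \<and> a - wx * (r * S + \<beta>) = \<beta> * cos \<alpha> \<and> b - wy * (r * S + \<beta>) = \<beta> * sin \<alpha>"

lemma straight_leg_length:
  assumes "straight_leg r wx wy a b S \<alpha> \<beta>"
  shows "sqrt ((a - wx * (r * S + \<beta>))\<^sup>2 + (b - wy * (r * S + \<beta>))\<^sup>2) = \<beta>"
proof -
  have "(\<beta> * cos \<alpha>)\<^sup>2 + (\<beta> * sin \<alpha>)\<^sup>2 = \<beta>\<^sup>2"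
    by (simp add: power_mult_distrib flip: distrib_left)
  with assms show ?thesis
    by (simp add: straight_leg_def)
qed

lemma straight_leg_less_turning:
  assumes "r > 0" and leg: "straight_leg r wx wy a b S \<alpha> \<beta>" and "0 \<le> S'" "S' \<le> S"
  obtains \<alpha>' \<beta>' where "0 \<le> \<alpha>'" "\<alpha>' < 2 * pi" "straight_leg r wx wy a b S' \<alpha>' \<beta>'"
    "r * S' + \<beta>' \<le> r * S + \<beta>"
proof -
  define dist_to_go where "dist_to_go T = sqrt ((a - wx * T)\<^sup>2 + (b - wy * T)\<^sup>2)" for T
  define g where "g T = T - dist_to_go T" for T
  have "g 0 \<le> 0"
    by (simp add: g_def dist_to_go_def)
  also have "0 \<le> r * S'"
    using \<open>r > 0\<close> \<open>0 \<le> S'\<close> by simp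
  finally have "g 0 \<le> r * S'" .
  moreover have "r * S' \<le> g (r * S + \<beta>)"
    using \<open>r > 0\<close> \<open>S' \<le> S\<close> straight_leg_length[OF leg] by (simp add: g_def dist_to_go_def)
  moreover have "0 \<le> r * S + \<beta>"
    using \<open>r > 0\<close> \<open>0 \<le> S'\<close> \<open>S' \<le> S\<close> leg by (simp add: straight_leg_def)
  moreover have "continuous_on {0 .. r * S + \<beta>} g"
    unfolding g_def dist_to_go_def by (intro continuous_intros)
  ultimately obtain T' where "T' \<le> r * S + \<beta>" "g T' = r * S'"
    using IVT'[of g 0 "r * S'" "r * S + \<beta>"] by blast
  define \<beta>' where "\<beta>' = dist_to_go T'"
  have "r * S' + \<beta>' = T'" "0 \<le> \<beta>'"
    using \<open>g T' = r * S'\<close> by (simp_all add: g_def \<beta>'_def dist_to_go_def)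
  moreover obtain t where "0 \<le> t" "t < 2 * pi" "a - wx * T' = \<beta>' * cos t" "b - wy * T' = \<beta>' * sin t"
    unfolding \<beta>'_def dist_to_go_def by (rule polar_coordinates_2pi)
  ultimately show ?thesis
    using \<open>T' \<le> r * S + \<beta>\<close> by (intro that[of t \<beta>']) (simp_all add: straight_leg_def)
qed

primrec turn_sign :: "path_type \<Rightarrow> real" where
  "turn_sign LSL = 1"
| "turn_sign RSR = -1"

text \<open>An \<open>RSR\<close> path is an \<open>LSL\<close> path mirrored in the \<open>x\<close>-axis.\<close>

lemma reaches_iff_straight_leg:
  "reaches pt r wx wy xf yf thf \<alpha> \<beta> \<gamma> \<longleftrightarrow>
     0 \<le> \<alpha> \<and> 0 \<le> \<gamma> \<and> (\<exists>k::int. turn_sign pt * (\<alpha> + \<gamma>) = 2 * of_int k * pi + thf) \<and>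
     straight_leg r wx (turn_sign pt * wy) (xf - turn_sign pt * r * sin thf)
       (turn_sign pt * yf - r * (1 - cos thf)) (\<alpha> + \<gamma>) \<alpha> \<beta>"
  by (cases pt) (auto simp: reaches_def straight_leg_def travel_time_def Let_def diff_eq_eq eq_diff_eq)

lemma turn_sign_winding_shift:
  assumes "turn_sign pt * S = 2 * of_int k * pi + thf"
  shows "\<exists>k'::int. turn_sign pt * (S - 2 * of_int m * pi) = 2 * of_int k' * pi + thf"
proof (cases pt)
  case LSL
  with assms show ?thesis
    by (intro exI[of _ "k - m"]) (simp add: algebra_simps)
next
  case RSR
  with assms show ?thesis
    by (intro exI[of _ "k + m"]) (simp add: algebra_simps)
qed

lemma reaches_less_turning:
  assumes "r > 0" and path: "reaches pt r wx wy xf yf thf \<alpha> \<beta> \<gamma>"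
    and S': "S' = \<alpha> + \<gamma> - 2 * of_int m * pi" "2 * pi \<le> S'" "0 \<le> m"
  obtains \<alpha>' \<beta>' where "0 \<le> \<alpha>'" "\<alpha>' < 2 * pi" "reaches pt r wx wy xf yf thf \<alpha>' \<beta>' (S' - \<alpha>')"
    "travel_time r \<alpha>' \<beta>' (S' - \<alpha>') \<le> travel_time r \<alpha> \<beta> \<gamma>"
proof -
  obtain k :: int where k: "turn_sign pt * (\<alpha> + \<gamma>) = 2 * of_int k * pi + thf"
    and leg: "straight_leg r wx (turn_sign pt * wy) (xf - turn_sign pt * r * sin thf)
       (turn_sign pt * yf - r * (1 - cos thf)) (\<alpha> + \<gamma>) \<alpha> \<beta>"
    using path unfolding reaches_iff_straight_leg by blast
  have winding: "\<exists>k'::int. turn_sign pt * S' = 2 * of_int k' * pi + thf"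
    unfolding S'(1) by (rule turn_sign_winding_shift[OF k])
  have "0 \<le> 2 * of_int m * pi"
    using \<open>0 \<le> m\<close> by simp
  then have "0 \<le> S'" "S' \<le> \<alpha> + \<gamma>"
    using S' pi_gt_zero by linarith+
  then obtain \<alpha>' \<beta>' where "0 \<le> \<alpha>'" "\<alpha>' < 2 * pi"
    and leg': "straight_leg r wx (turn_sign pt * wy) (xf - turn_sign pt * r * sin thf)
       (turn_sign pt * yf - r * (1 - cos thf)) S' \<alpha>' \<beta>'"
    and faster: "r * S' + \<beta>' \<le> r * (\<alpha> + \<gamma>) + \<beta>"
    using straight_leg_less_turning[OF \<open>r > 0\<close> leg] by blast
  show ?thesis
  proof (rule that[of \<alpha>' \<beta>'])
    show "reaches pt r wx wy xf yf thf \<alpha>' \<beta>' (S' - \<alpha>')"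
      using \<open>0 \<le> \<alpha>'\<close> \<open>\<alpha>' < 2 * pi\<close> \<open>2 * pi \<le> S'\<close> winding leg'
      by (simp add: reaches_iff_straight_leg)
    show "travel_time r \<alpha>' \<beta>' (S' - \<alpha>') \<le> travel_time r \<alpha> \<beta> \<gamma>"
      using faster by (simp add: travel_time_def)
  qed fact+
qed

lemma shift_into_2pi_4pi:
  fixes S :: real
  assumes "4 * pi \<le> S"
  obtains m :: int where "0 \<le> m" "2 * pi \<le> S - 2 * of_int m * pi" "S - 2 * of_int m * pi < 4 * pi"
proof
  define x where "x = S / (2 * pi)"
  define m where "m = \<lfloor>x\<rfloor> - 1"
  have S: "S - 2 * of_int m * pi = 2 * pi * (x - of_int m)"
    by (simp add: x_def algebra_simps)
  have "1 \<le> x - of_int m" "x - of_int m < 2"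
    by (simp_all add: m_def) linarith+
  then show "2 * pi \<le> S - 2 * of_int m * pi" "S - 2 * of_int m * pi < 4 * pi"
    unfolding S by simp_all
  have "2 \<le> x"
    using assms by (simp add: x_def field_simps)
  then show "0 \<le> m"
    by (simp add: m_def le_floor_iff)
qed

lemma reaches_with_4pi_arcs:
  assumes "r > 0" and path: "reaches pt r wx wy xf yf thf \<alpha> \<beta> \<gamma>"
  obtains \<alpha>' \<beta>' \<gamma>' where "reaches pt r wx wy xf yf thf \<alpha>' \<beta>' \<gamma>'" "arc_bounded 2 \<alpha>' \<gamma>'"
    "travel_time r \<alpha>' \<beta>' \<gamma>' \<le> travel_time r \<alpha> \<beta> \<gamma>"
proof (cases "\<alpha> + \<gamma> < 4 * pi")
  case True
  moreover have "0 \<le> \<alpha>" "0 \<le> \<gamma>"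
    using path by (simp_all add: reaches_def)
  ultimately have "arc_bounded 2 \<alpha> \<gamma>"
    by (simp add: arc_bounded_def)
  with path show ?thesis
    by (rule that) simp
next
  case False
  then have "4 * pi \<le> \<alpha> + \<gamma>"
    by simp
  then obtain m :: int where m: "0 \<le> m" "2 * pi \<le> \<alpha> + \<gamma> - 2 * of_int m * pi"
    "\<alpha> + \<gamma> - 2 * of_int m * pi < 4 * pi"
    by (rule shift_into_2pi_4pi)
  define S' where "S' = \<alpha> + \<gamma> - 2 * of_int m * pi"
  obtain \<alpha>' \<beta>' where "0 \<le> \<alpha>'" "\<alpha>' < 2 * pi" "reaches pt r wx wy xf yf thf \<alpha>' \<beta>' (S' - \<alpha>')"
    "travel_time r \<alpha>' \<beta>' (S' - \<alpha>') \<le> travel_time r \<alpha> \<beta> \<gamma>"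
    using reaches_less_turning[OF \<open>r > 0\<close> path S'_def] m by (auto simp: S'_def)
  moreover have "arc_bounded 2 \<alpha>' (S' - \<alpha>')"
    using \<open>0 \<le> \<alpha>'\<close> \<open>\<alpha>' < 2 * pi\<close> m by (simp add: arc_bounded_def S'_def)
  ultimately show ?thesis
    by (intro that[of \<alpha>' \<beta>' "S' - \<alpha>'"])
qed

theorem theorem4:
  fixes r wx wy xf yf thf :: real and n :: nat
  assumes "r > 0"
    and "0 < sqrt (wx\<^sup>2 + wy\<^sup>2)" and "sqrt (wx\<^sup>2 + wy\<^sup>2) < 1"
    and "0 \<le> thf" and "thf < 2 * pi"
    and "n > 2"
  shows "\<forall>pt \<alpha> \<beta> \<gamma>. reaches pt r wx wy xf yf thf \<alpha> \<beta> \<gamma> \<and> arc_bounded n \<alpha> \<gamma> \<longrightarrow>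
           (\<exists>pt' \<alpha>' \<beta>' \<gamma>'. reaches pt' r wx wy xf yf thf \<alpha>' \<beta>' \<gamma>' \<and> arc_bounded 2 \<alpha>' \<gamma>' \<and>
              travel_time r \<alpha>' \<beta>' \<gamma>' \<le> travel_time r \<alpha> \<beta> \<gamma>)"
proof (intro allI impI)
  fix pt \<alpha> \<beta> \<gamma>
  assume "reaches pt r wx wy xf yf thf \<alpha> \<beta> \<gamma> \<and> arc_bounded n \<alpha> \<gamma>"
  then have "reaches pt r wx wy xf yf thf \<alpha> \<beta> \<gamma>"
    by (rule conjunct1)
  then obtain \<alpha>' \<beta>' \<gamma>' where "reaches pt r wx wy xf yf thf \<alpha>' \<beta>' \<gamma>'" "arc_bounded 2 \<alpha>' \<gamma>'"
    "travel_time r \<alpha>' \<beta>' \<gamma>' \<le> travel_time r \<alpha> \<beta> \<gamma>"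
    by (rule reaches_with_4pi_arcs[OF \<open>r > 0\<close>])
  then show "\<exists>pt' \<alpha>' \<beta>' \<gamma>'. reaches pt' r wx wy xf yf thf \<alpha>' \<beta>' \<gamma>' \<and> arc_bounded 2 \<alpha>' \<gamma>' \<and>
      travel_time r \<alpha>' \<beta>' \<gamma>' \<le> travel_time r \<alpha> \<beta> \<gamma>"
    by blast
qed

end
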